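(* Assume $N\ge2$, $\mathcal{G}_u$ connected and Assumption 1. Let $A=[A_1;A_2]\in\mathbb{R}^{4EM\times NM}$ and $B=[-I_{2EM};-I_{2EM}]$, $f(x)=\sum_i f_i(x_i)$. Consider the iteration: given $x^0\in\mathbb{R}^{NM}$, set $x^0_{[Q]}=Q(x^0)$, $z_Q^0=\tfrac12M_+^Tx^0_{[Q]}$, and $\lambda_Q^0=[\beta_Q^0;\gamma_Q^0]$ with $\gamma_Q^0=-\beta_Q^0$; for $k\ge0$ let $x^{k+1}$ be the minimizer of $f(x)+(\lambda_Q^k)^T(Ax+Bz_Q^k)+\tfrac{\rho}{2}\|Ax+Bz_Q^k\|_2^2$, $x^{k+1}_{[Q]}=Q(x^{k+1})$, $z_Q^{k+1}$ the solution of $B^T\lambda_Q^k+\rho B^T(Ax^{k+1}_{[Q]}+Bz_Q^{k+1})=0$, and $\lambda_Q^{k+1}=\lambda_Q^k+\rho(Ax^{k+1}_{[Q]}+Bz_Q^{k+1})$, where $\lambda_Q^k=[\beta_Q^k;\gamma_Q^k]$ with $\beta_Q^k,\gamma_Q^k\in\mathbb{R}^{2EM}$. Then for all $k\ge0$: $\gamma_Q^k=-\beta_Q^k$, $z_Q^k=\tfrac12M_+^Tx^k_{[Q]}$, and, with $\alpha_Q^k:=M_-\beta_Q^k$, the pair $(x^k,\alpha_Q^k)$ satisfies $0\in\partial f(x^{k+1})+2\rho Wx^{k+1}+\alpha_Q^k-\rho L_+x^k_{[Q]}$ and $\alpha_Q^{k+1}=\alpha_Q^k+\rho L_-x^{k+1}_{[Q]}$;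 that is, it coincides with the QC-ADMM iteration started from $x^0$ and $\alpha_Q^0=M_-\beta_Q^0$.
   Context: Network and matrices: $\mathcal{G}_u$ is an undirected graph with vertices $\{1,\dots,N\}$ and $E$ edges; $\mathcal{N}_i$ is the neighbor set of $i$. Each edge $\{i,j\}$ gives arcs $(i,j),(j,i)$, enumerated $q=1,\dots,2E$. Fix $M\ge1$. $A_1,A_2\in\mathbb{R}^{2EM\times NM}$ consist of $2E\times N$ blocks of size $M\times M$: if arc $q$ is $(i,j)$, the $(q,i)$ block of $A_1$ and the $(q,j)$ block of $A_2$ are $I_M$, other blocks zero. $M_+=A_1^T+A_2^T$, $M_-=A_1^T-A_2^T$, $L_+=\tfrac12M_+M_+^T$, $L_-=\tfrac12M_-M_-^T$, and $W$ is block diagonal with $i$th diagonal block $|\mathcal{N}_i|I_M$. Vectors in $\mathbb{R}^{NM}$ are $x=[x_1;\dots;x_N]$, $x_i\in\mathbb{R}^M$. Assumption 1: each $f_i:\mathbb{R}^M\to\mathbb{R}\cup\{\infty\}$ is proper, closed and convex, has a subgradient wherever finite, and $\min\sum_if_i$ is attained. Quantizer: $\Delta>0$; the scalar rounding quantizer is $Q(y)=t\Delta$ if $(t-\tfrac12)\Delta\le y<(t+\tfrac12)\Delta$, $t\in\mathbb{Z}$; for vectors it acts entrywise, and $w_{[Q]}=Q(w)$. $\rho>0$ is fixed. *)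

theory Defs
  imports "Jordan_Normal_Form.Matrix" "HOL-Library.Extended_Real" "HOL-Library.Liminf_Limsup"
begin

(* Vertices are 0..N-1 (the paper's 1..N shifted by one). Vectors in R^{NM} are flattened:
   entry m (0-based) of block i is at index i*M + m. *)

definition graph_with_arcs :: "nat \<Rightarrow> (nat \<Rightarrow> nat \<Rightarrow> bool) \<Rightarrow> (nat \<times> nat) list \<Rightarrow> bool" where
  "graph_with_arcs N adj arcs \<longleftrightarrow>
     (\<forall>i j. adj i j \<longrightarrow> i < N \<and> j < N) \<and>
     (\<forall>i j. adj i j \<longrightarrow> adj j i) \<and>
     (\<forall>i. \<not> adj i i) \<and>
     distinct arcs \<and> set arcs = {(i, j). adj i j}"

definition connected_graph :: "nat \<Rightarrow> (nat \<Rightarrow> nat \<Rightarrow> bool) \<Rightarrow> bool" where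
  "connected_graph N adj \<longleftrightarrow> (\<forall>i<N. \<forall>j<N. adj\<^sup>*\<^sup>* i j)"

definition nbrs :: "nat \<Rightarrow> (nat \<Rightarrow> nat \<Rightarrow> bool) \<Rightarrow> nat \<Rightarrow> nat set" where
  "nbrs N adj i = {j. j < N \<and> adj i j}"

text \<open>A_1, A_2: (2EM) x (NM), block (q,i) of A_1 is I_M iff arc q = (i,j); block (q,j) of A_2 is I_M.\<close>
definition A1mat :: "nat \<Rightarrow> nat \<Rightarrow> (nat \<times> nat) list \<Rightarrow> real mat" where
  "A1mat N M arcs = mat (length arcs * M) (N * M)
     (\<lambda>(r, c). if fst (arcs ! (r div M)) = c div M \<and> r mod M = c mod M then 1 else 0)"

definition A2mat :: "nat \<Rightarrow> nat \<Rightarrow> (nat \<times> nat) list \<Rightarrow> real mat" where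
  "A2mat N M arcs = mat (length arcs * M) (N * M)
     (\<lambda>(r, c). if snd (arcs ! (r div M)) = c div M \<and> r mod M = c mod M then 1 else 0)"

definition Mplus :: "nat \<Rightarrow> nat \<Rightarrow> (nat \<times> nat) list \<Rightarrow> real mat" where
  "Mplus N M arcs = transpose_mat (A1mat N M arcs) + transpose_mat (A2mat N M arcs)"

definition Mminus :: "nat \<Rightarrow> nat \<Rightarrow> (nat \<times> nat) list \<Rightarrow> real mat" where
  "Mminus N M arcs = transpose_mat (A1mat N M arcs) - transpose_mat (A2mat N M arcs)"

definition Lplus :: "nat \<Rightarrow> nat \<Rightarrow> (nat \<times> nat) list \<Rightarrow> real mat" where
  "Lplus N M arcs = (1/2) \<cdot>\<^sub>m (Mplus N M arcs * transpose_mat (Mplus N M arcs))"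

definition Lminus :: "nat \<Rightarrow> nat \<Rightarrow> (nat \<times> nat) list \<Rightarrow> real mat" where
  "Lminus N M arcs = (1/2) \<cdot>\<^sub>m (Mminus N M arcs * transpose_mat (Mminus N M arcs))"

definition Wmat :: "nat \<Rightarrow> nat \<Rightarrow> (nat \<Rightarrow> nat \<Rightarrow> bool) \<Rightarrow> real mat" where
  "Wmat N M adj = mat (N * M) (N * M)
     (\<lambda>(r, c). if r = c then real (card (nbrs N adj (r div M))) else 0)"

definition Amat :: "nat \<Rightarrow> nat \<Rightarrow> (nat \<times> nat) list \<Rightarrow> real mat" where
  "Amat N M arcs = A1mat N M arcs @\<^sub>r A2mat N M arcs"

definition Bmat :: "nat \<Rightarrow> (nat \<times> nat) list \<Rightarrow> real mat" where
  "Bmat M arcs = (- 1\<^sub>m (length arcs * M)) @\<^sub>r (- 1\<^sub>m (length arcs * M))"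

definition blk :: "nat \<Rightarrow> real vec \<Rightarrow> nat \<Rightarrow> real vec" where
  "blk M x i = vec M (\<lambda>m. x $ (i * M + m))"

definition fsum :: "nat \<Rightarrow> nat \<Rightarrow> (nat \<Rightarrow> real vec \<Rightarrow> ereal) \<Rightarrow> real vec \<Rightarrow> ereal" where
  "fsum N M f x = (\<Sum>i<N. f i (blk M x i))"

definition Qs :: "real \<Rightarrow> real \<Rightarrow> real" where
  "Qs \<Delta> y = \<Delta> * of_int \<lfloor>y / \<Delta> + 1/2\<rfloor>"

definition Qv :: "real \<Rightarrow> real vec \<Rightarrow> real vec" where
  "Qv \<Delta> w = map_vec (Qs \<Delta>) w"

definition proper_fun :: "nat \<Rightarrow> (real vec \<Rightarrow> ereal) \<Rightarrow> bool" where
  "proper_fun n g \<longleftrightarrow> (\<forall>x\<in>carrier_vec n. g x \<noteq> -\<infinity>) \<and> (\<exists>x\<in>carrier_vec n. g x \<noteq> \<infinity>)"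

definition convex_fun :: "nat \<Rightarrow> (real vec \<Rightarrow> ereal) \<Rightarrow> bool" where
  "convex_fun n g \<longleftrightarrow> (\<forall>x\<in>carrier_vec n. \<forall>y\<in>carrier_vec n. \<forall>t::real. 0 < t \<and> t < 1 \<longrightarrow>
      g (t \<cdot>\<^sub>v x + (1 - t) \<cdot>\<^sub>v y) \<le> ereal t * g x + ereal (1 - t) * g y)"

text \<open>Closed = lower semicontinuous (sequential characterisation on R^n).\<close>
definition closed_fun :: "nat \<Rightarrow> (real vec \<Rightarrow> ereal) \<Rightarrow> bool" where
  "closed_fun n g \<longleftrightarrow> (\<forall>xs x. (\<forall>k. xs k \<in> carrier_vec n) \<longrightarrow> x \<in> carrier_vec n \<longrightarrow>
      (\<forall>j<n. (\<lambda>k. xs k $ j) \<longlonglongrightarrow> x $ j) \<longrightarrow> g x \<le> liminf (\<lambda>k. g (xs k)))"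

definition subdiff :: "nat \<Rightarrow> (real vec \<Rightarrow> ereal) \<Rightarrow> real vec \<Rightarrow> real vec set" where
  "subdiff n g x = {v \<in> carrier_vec n. \<forall>y\<in>carrier_vec n. g y \<ge> g x + ereal (v \<bullet> (y - x))}"

definition assumption1 :: "nat \<Rightarrow> nat \<Rightarrow> (nat \<Rightarrow> real vec \<Rightarrow> ereal) \<Rightarrow> bool" where
  "assumption1 N M f \<longleftrightarrow>
     (\<forall>i<N. proper_fun M (f i) \<and> closed_fun M (f i) \<and> convex_fun M (f i) \<and>
        (\<forall>x\<in>carrier_vec M. f i x \<noteq> \<infinity> \<longrightarrow> subdiff M (f i) x \<noteq> {})) \<and>
     (\<exists>x\<in>carrier_vec (N * M). \<forall>y\<in>carrier_vec (N * M). fsum N M f x \<le> fsum N M f y)"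

end

theory Submission
  imports Defs
begin

text \<open>Since B^T B = 2 I and B^T A = -M_+^T, the z-update says exactly that B^T lambda^(k+1) = 0,
  i.e. gamma = -beta after every dual step; given B^T lambda^k = 0 it also forces
  z^(k+1) = M_+^T x_[Q]^(k+1) / 2. Substituting lambda = [beta; -beta] and this z into the
  optimality condition 0 \<in> \<partial>f(x) + A^T (lambda + rho (A x + B z)) of the x-update and using
  A_1^T A_1 = A_2^T A_2 = W yields the QC-ADMM x-update, while applying M_- to the beta-half of the
  dual update yields the alpha-update.\<close>

lemma transpose_append_rows_mult_vec:
  fixes A B :: "'a :: comm_ring mat"
  assumes A: "A \<in> carrier_mat nr1 nc" and B: "B \<in> carrier_mat nr2 nc"
    and u: "u \<in> carrier_vec nr1" and v: "v \<in> carrier_vec nr2"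
  shows "transpose_mat (A @\<^sub>r B) *\<^sub>v (u @\<^sub>v v) = transpose_mat A *\<^sub>v u + transpose_mat B *\<^sub>v v"
proof (rule eq_vecI)
  fix j assume "j < dim_vec (transpose_mat A *\<^sub>v u + transpose_mat B *\<^sub>v v)"
  hence j: "j < nc" using B by simp
  have "dim_col (A @\<^sub>r B) = nc" using A B by (auto simp: append_rows_def)
  hence "(transpose_mat (A @\<^sub>r B) *\<^sub>v (u @\<^sub>v v)) $ j = col (A @\<^sub>r B) j \<bullet> (u @\<^sub>v v)"
    using j by simp
  also have "col (A @\<^sub>r B) j = col A j @\<^sub>v col B j"
    unfolding append_rows_def using A B j by (subst col_four_block_mat) auto
  finally show "(transpose_mat (A @\<^sub>r B) *\<^sub>v (u @\<^sub>v v)) $ j = (transpose_mat A *\<^sub>v u + transpose_mat B *\<^sub>v v) $ j"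
    using A B u v j by (simp add: scalar_prod_append[of _ nr1 _ nr2])
qed (use A B in \<open>simp add: append_rows_def\<close>)

lemma smult_mat_mult_vec:
  fixes A :: "'a :: comm_ring mat"
  shows "dim_vec v = dim_col A \<Longrightarrow> (c \<cdot>\<^sub>m A) *\<^sub>v v = c \<cdot>\<^sub>v (A *\<^sub>v v)"
  by (intro eq_vecI) (auto simp: scalar_prod_def sum_distrib_left ac_simps)

lemma smult_append_vec: "c \<cdot>\<^sub>v (u @\<^sub>v v) = (c \<cdot>\<^sub>v u) @\<^sub>v (c \<cdot>\<^sub>v v)"
  by (intro eq_vecI) auto

lemma vec_first_append: "u \<in> carrier_vec n \<Longrightarrow> vec_first (u @\<^sub>v v) n = u"
  unfolding vec_first_def by (intro eq_vecI) auto

lemma A1mat_carrier[simp]: "A1mat N M arcs \<in> carrier_mat (length arcs * M) (N * M)"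
  unfolding A1mat_def by simp

lemma A2mat_carrier[simp]: "A2mat N M arcs \<in> carrier_mat (length arcs * M) (N * M)"
  unfolding A2mat_def by simp

lemma Mplus_carrier[simp]: "Mplus N M arcs \<in> carrier_mat (N * M) (length arcs * M)"
  unfolding Mplus_def by simp

lemma Mminus_carrier[simp]: "Mminus N M arcs \<in> carrier_mat (N * M) (length arcs * M)"
  unfolding Mminus_def by (simp add: minus_carrier_mat)

lemma Lplus_carrier[simp]: "Lplus N M arcs \<in> carrier_mat (N * M) (N * M)"
  using Mplus_carrier[of N M arcs] unfolding Lplus_def carrier_mat_def by simp

lemma Lminus_carrier[simp]: "Lminus N M arcs \<in> carrier_mat (N * M) (N * M)"
  using Mminus_carrier[of N M arcs] unfolding Lminus_def carrier_mat_def by simp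

lemma Wmat_carrier[simp]: "Wmat N M adj \<in> carrier_mat (N * M) (N * M)"
  unfolding Wmat_def by simp

lemma Amat_carrier[simp]: "Amat N M arcs \<in> carrier_mat (length arcs * M + length arcs * M) (N * M)"
  unfolding Amat_def by simp

lemma Bmat_carrier[simp]:
  "Bmat M arcs \<in> carrier_mat (length arcs * M + length arcs * M) (length arcs * M)"
  unfolding Bmat_def by simp

lemma Qv_carrier[simp]: "v \<in> carrier_vec n \<Longrightarrow> Qv \<Delta> v \<in> carrier_vec n"
  unfolding Qv_def by simp

lemmas matrix_dims[simp] =
  carrier_matD[OF A1mat_carrier] carrier_matD[OF A2mat_carrier] carrier_matD[OF Amat_carrier]
  carrier_matD[OF Bmat_carrier] carrier_matD[OF Mplus_carrier] carrier_matD[OF Mminus_carrier]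
  carrier_matD[OF Lplus_carrier] carrier_matD[OF Lminus_carrier] carrier_matD[OF Wmat_carrier]

lemma mult_mat_vec_carrier_rows: "A \<in> carrier_mat nr nc \<Longrightarrow> A *\<^sub>v v \<in> carrier_vec nr"
  by (rule carrier_vecI) simp

lemmas mult_mat_vec_carrier_rows_simps[simp] =
  mult_mat_vec_carrier_rows[OF A1mat_carrier] mult_mat_vec_carrier_rows[OF A2mat_carrier]
  mult_mat_vec_carrier_rows[OF Amat_carrier] mult_mat_vec_carrier_rows[OF Bmat_carrier]
  mult_mat_vec_carrier_rows[OF Mplus_carrier] mult_mat_vec_carrier_rows[OF Mminus_carrier]
  mult_mat_vec_carrier_rows[OF Lplus_carrier] mult_mat_vec_carrier_rows[OF Lminus_carrier]
  mult_mat_vec_carrier_rows[OF Wmat_carrier]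
  mult_mat_vec_carrier_rows[OF transpose_carrier_mat[THEN iffD2, OF A1mat_carrier]]
  mult_mat_vec_carrier_rows[OF transpose_carrier_mat[THEN iffD2, OF A2mat_carrier]]
  mult_mat_vec_carrier_rows[OF transpose_carrier_mat[THEN iffD2, OF Amat_carrier]]
  mult_mat_vec_carrier_rows[OF transpose_carrier_mat[THEN iffD2, OF Bmat_carrier]]
  mult_mat_vec_carrier_rows[OF transpose_carrier_mat[THEN iffD2, OF Mplus_carrier]]
  mult_mat_vec_carrier_rows[OF transpose_carrier_mat[THEN iffD2, OF Mminus_carrier]]

lemma transpose_Mplus: "transpose_mat (Mplus N M arcs) = A1mat N M arcs + A2mat N M arcs"
  unfolding Mplus_def by (subst transpose_add[of _ "N * M" "length arcs * M"]) auto

lemma transpose_Mminus: "transpose_mat (Mminus N M arcs) = A1mat N M arcs - A2mat N M arcs"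
  unfolding Mminus_def by (subst transpose_minus[of _ "N * M" "length arcs * M"]) auto

lemma Amat_mult_vec:
  "y \<in> carrier_vec (N * M) \<Longrightarrow>
   Amat N M arcs *\<^sub>v y = (A1mat N M arcs *\<^sub>v y) @\<^sub>v (A2mat N M arcs *\<^sub>v y)"
  unfolding Amat_def by (rule mat_mult_append[OF A1mat_carrier A2mat_carrier])

lemma Bmat_mult_vec:
  "w \<in> carrier_vec (length arcs * M) \<Longrightarrow> Bmat M arcs *\<^sub>v w = (- w) @\<^sub>v (- w)"
  unfolding Bmat_def by (subst mat_mult_append[of _ "length arcs * M" "length arcs * M"]) auto

lemma transpose_Amat_mult_vec:
  "u \<in> carrier_vec (length arcs * M) \<Longrightarrow> v \<in> carrier_vec (length arcs * M) \<Longrightarrow>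
   transpose_mat (Amat N M arcs) *\<^sub>v (u @\<^sub>v v)
     = transpose_mat (A1mat N M arcs) *\<^sub>v u + transpose_mat (A2mat N M arcs) *\<^sub>v v"
  unfolding Amat_def by (rule transpose_append_rows_mult_vec[OF A1mat_carrier A2mat_carrier])

lemma transpose_Bmat_mult_vec:
  "u \<in> carrier_vec (length arcs * M) \<Longrightarrow> v \<in> carrier_vec (length arcs * M) \<Longrightarrow>
   transpose_mat (Bmat M arcs) *\<^sub>v (u @\<^sub>v v) = - u - v"
  unfolding Bmat_def
  by (subst transpose_append_rows_mult_vec[of _ "length arcs * M" "length arcs * M"])
     (auto intro!: eq_vecI)

section \<open>Incidence matrices of the graph\<close>

lemma card_block_indices:
  fixes L M s :: nat
  assumes s: "s < M"
  shows "card ({0..<L * M} \<inter> {r. P (r div M) \<and> r mod M = s}) = card {q. q < L \<and> P q}"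
proof -
  have "({0..<L * M} \<inter> {r. P (r div M) \<and> r mod M = s}) = (\<lambda>q. q * M + s) ` {q. q < L \<and> P q}"
  proof (intro equalityI subsetI)
    fix r assume r: "r \<in> ({0..<L * M} \<inter> {r. P (r div M) \<and> r mod M = s})"
    hence "r < L * M" by simp
    hence "r div M < L" by (rule less_mult_imp_div_less)
    moreover have "r = r div M * M + s" using r div_mult_mod_eq[of r M] by simp
    ultimately show "r \<in> (\<lambda>q. q * M + s) ` {q. q < L \<and> P q}"
      using r by (intro image_eqI[of _ _ "r div M"]) auto
  next
    fix r assume "r \<in> (\<lambda>q. q * M + s) ` {q. q < L \<and> P q}"
    then obtain q where q: "q < L" "P q" "r = q * M + s" by auto
    have "q * M + s < (q + 1) * M" using s by simp
    also have "\<dots> \<le> L * M" using q(1) by (intro mult_right_mono) auto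
    finally show "r \<in> ({0..<L * M} \<inter> {r. P (r div M) \<and> r mod M = s})" using q s by auto
  qed
  also have "card \<dots> = card {q. q < L \<and> P q}"
    using s by (intro card_image inj_onI) auto
  finally show ?thesis .
qed

definition arc_incidence :: "nat \<Rightarrow> nat \<Rightarrow> (nat \<times> nat) list \<Rightarrow> (nat \<times> nat \<Rightarrow> nat) \<Rightarrow> real mat" where
  "arc_incidence N M arcs e = mat (length arcs * M) (N * M)
     (\<lambda>(r, c). if e (arcs ! (r div M)) = c div M \<and> r mod M = c mod M then 1 else 0)"

lemma transpose_arc_incidence_mult_self:
  "transpose_mat (arc_incidence N M arcs e) * arc_incidence N M arcs e =
     mat (N * M) (N * M)
       (\<lambda>(c, c'). if c = c' then real (card {q. q < length arcs \<and> e (arcs ! q) = c div M}) else 0)"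
  (is "?G = mat _ _ ?D")
proof (rule eq_matI)
  fix c c' assume "c < dim_row (mat (N * M) (N * M) ?D)" "c' < dim_col (mat (N * M) (N * M) ?D)"
  hence c: "c < N * M" "c' < N * M" by auto
  let ?hit = "\<lambda>r c. e (arcs ! (r div M)) = c div M \<and> r mod M = c mod M"
  have "?G $$ (c, c') = (\<Sum>r\<in>{0..<length arcs * M}.
          (if ?hit r c then 1 else 0) * (if ?hit r c' then 1 else (0::real)))"
    using c by (simp add: arc_incidence_def scalar_prod_def)
  also have "\<dots> = ?D (c, c')"
  proof (cases "c = c'")
    case True
    have "c mod M < M" using c by (cases "M = 0") auto
    have "(\<Sum>r\<in>{0..<length arcs * M}. (if ?hit r c then 1 else 0) * (if ?hit r c' then 1 else (0::real)))
        = (\<Sum>r\<in>{0..<length arcs * M}. of_bool (?hit r c))"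
      using True by (intro sum.cong) auto
    also have "\<dots> = real (card ({0..<length arcs * M} \<inter> {r. ?hit r c}))"
      by simp
    also have "\<dots> = real (card {q. q < length arcs \<and> e (arcs ! q) = c div M})"
      using card_block_indices[OF \<open>c mod M < M\<close>] by simp
    finally show ?thesis using True by simp
  next
    case False
    have "\<not> (?hit r c \<and> ?hit r c')" for r using False div_mult_mod_eq by metis
    then show ?thesis using False by (intro trans[OF sum.neutral]) auto
  qed
  finally show "?G $$ (c, c') = mat (N * M) (N * M) ?D $$ (c, c')" using c by simp
qed (auto simp: arc_incidence_def)

lemma card_indices_distinct:
  "distinct xs \<Longrightarrow> card {q. q < length xs \<and> P (xs ! q)} = card ({a. P a} \<inter> set xs)"
  by (metis length_filter_conv_card distinct_length_filter)

lemma card_arcs_from: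
  assumes "graph_with_arcs N adj arcs"
  shows "card {q. q < length arcs \<and> fst (arcs ! q) = i} = card (nbrs N adj i)"
proof -
  have "{a. fst a = i} \<inter> set arcs = Pair i ` nbrs N adj i"
    using assms unfolding graph_with_arcs_def nbrs_def by auto
  then show ?thesis
    using assms card_indices_distinct[of arcs "\<lambda>a. fst a = i"]
    unfolding graph_with_arcs_def by (simp add: card_image inj_on_def)
qed

lemma card_arcs_into:
  assumes "graph_with_arcs N adj arcs"
  shows "card {q. q < length arcs \<and> snd (arcs ! q) = i} = card (nbrs N adj i)"
proof -
  have "{a. snd a = i} \<inter> set arcs = (\<lambda>j. (j, i)) ` nbrs N adj i"
    using assms unfolding graph_with_arcs_def nbrs_def by auto
  then show ?thesis
    using assms card_indices_distinct[of arcs "\<lambda>a. snd a = i"]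
    unfolding graph_with_arcs_def by (simp add: card_image inj_on_def)
qed

lemma transpose_A1mat_mult_A1mat:
  assumes "graph_with_arcs N adj arcs"
  shows "transpose_mat (A1mat N M arcs) * A1mat N M arcs = Wmat N M adj"
  using transpose_arc_incidence_mult_self[of N M arcs fst]
  unfolding arc_incidence_def A1mat_def Wmat_def card_arcs_from[OF assms] .

lemma transpose_A2mat_mult_A2mat:
  assumes "graph_with_arcs N adj arcs"
  shows "transpose_mat (A2mat N M arcs) * A2mat N M arcs = Wmat N M adj"
  using transpose_arc_incidence_mult_self[of N M arcs snd]
  unfolding arc_incidence_def A2mat_def Wmat_def card_arcs_into[OF assms] .

lemma block_index_less: "i < N \<Longrightarrow> m < M \<Longrightarrow> i * M + m < N * (M :: nat)"
proof -
  assume "i < N" "m < M"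
  then have "i * M + m < (i + 1) * M" by simp
  also have "\<dots> \<le> N * M" using \<open>i < N\<close> by (intro mult_right_mono) auto
  finally show ?thesis .
qed

lemma blk_carrier[simp]: "blk M v i \<in> carrier_vec M"
  unfolding blk_def by simp

lemma blk_lincomb:
  assumes "x \<in> carrier_vec (N * M)" "y \<in> carrier_vec (N * M)" "i < N"
  shows "blk M (a \<cdot>\<^sub>v x + b \<cdot>\<^sub>v y) i = a \<cdot>\<^sub>v blk M x i + b \<cdot>\<^sub>v blk M y i"
  using assms block_index_less[OF \<open>i < N\<close>] unfolding blk_def by (intro eq_vecI) auto

lemma sum_neq_MInfty:
  fixes g :: "'a \<Rightarrow> ereal"
  shows "(\<And>i. i \<in> A \<Longrightarrow> g i \<noteq> -\<infinity>) \<Longrightarrow> sum g A \<noteq> -\<infinity>"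
proof (induction A rule: infinite_finite_induct)
  case (insert a A)
  then show ?case by (cases "g a"; cases "sum g A") auto
qed auto

lemma proper_fun_fsum:
  assumes "\<And>i. i < N \<Longrightarrow> proper_fun M (f i)"
  shows "proper_fun (N * M) (fsum N M f)"
  unfolding proper_fun_def
proof
  show "\<forall>x\<in>carrier_vec (N * M). fsum N M f x \<noteq> -\<infinity>"
    using assms unfolding fsum_def proper_fun_def by (auto intro!: sum_neq_MInfty)
  obtain u where u: "\<And>i. i < N \<Longrightarrow> u i \<in> carrier_vec M \<and> f i (u i) \<noteq> \<infinity>"
    using assms unfolding proper_fun_def by metis
  define y where "y = vec (N * M) (\<lambda>r. u (r div M) $ (r mod M))"
  have "blk M y i = u i" if "i < N" for i
    using u[OF that] block_index_less[OF that] unfolding y_def blk_def by (intro eq_vecI) auto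
  then have "fsum N M f y \<noteq> \<infinity>"
    using u unfolding fsum_def sum_Pinfty by auto
  then show "\<exists>x\<in>carrier_vec (N * M). fsum N M f x \<noteq> \<infinity>"
    unfolding y_def by auto
qed

lemma convex_fun_fsum:
  assumes "\<And>i. i < N \<Longrightarrow> convex_fun M (f i)"
  shows "convex_fun (N * M) (fsum N M f)"
  unfolding convex_fun_def
proof (intro ballI allI impI)
  fix x y :: "real vec" and t :: real
  assume x: "x \<in> carrier_vec (N * M)" and y: "y \<in> carrier_vec (N * M)" and t: "0 < t \<and> t < 1"
  have "fsum N M f (t \<cdot>\<^sub>v x + (1 - t) \<cdot>\<^sub>v y)
      = (\<Sum>i<N. f i (t \<cdot>\<^sub>v blk M x i + (1 - t) \<cdot>\<^sub>v blk M y i))"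
    unfolding fsum_def using blk_lincomb[OF x y] by simp
  also have "\<dots> \<le> (\<Sum>i<N. ereal t * f i (blk M x i) + ereal (1 - t) * f i (blk M y i))"
    using assms t unfolding convex_fun_def by (intro sum_mono) auto
  also have "\<dots> = ereal t * fsum N M f x + ereal (1 - t) * fsum N M f y"
    using t unfolding fsum_def sum.distrib
    by (simp add: sum_distrib_right_ereal mult.commute[of "ereal _"])
  finally show "fsum N M f (t \<cdot>\<^sub>v x + (1 - t) \<cdot>\<^sub>v y)
      \<le> ereal t * fsum N M f x + ereal (1 - t) * fsum N M f y" .
qed

section \<open>First-order optimality of the augmented Lagrangian step\<close>

lemma subdiff_of_minimizer_plus_quadratic:
  fixes F :: "real vec \<Rightarrow> ereal" and H C :: "real vec \<Rightarrow> real"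
  assumes proper: "proper_fun n F" and convex: "convex_fun n F"
    and x: "x \<in> carrier_vec n" and v: "v \<in> carrier_vec n"
    and min: "\<And>y. y \<in> carrier_vec n \<Longrightarrow> F x + ereal (H x) \<le> F y + ereal (H y)"
    and H_expansion: "\<And>d t. d \<in> carrier_vec n \<Longrightarrow> H (x + t \<cdot>\<^sub>v d) = H x + t * (v \<bullet> d) + t\<^sup>2 * C d"
  shows "- v \<in> subdiff n F x"
  unfolding subdiff_def
proof (intro CollectI conjI ballI)
  show "- v \<in> carrier_vec n" using v by simp
  have not_MInfty: "F y \<noteq> -\<infinity>" if "y \<in> carrier_vec n" for y
    using proper that unfolding proper_fun_def by blast
  obtain a where a: "F x = ereal a"
  proof -
    obtain y0 where "y0 \<in> carrier_vec n" "F y0 \<noteq> \<infinity>"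
      using proper unfolding proper_fun_def by blast
    then have "F x \<noteq> \<infinity>"
      using min[of y0] not_MInfty[of y0] by (cases "F y0") auto
    then show ?thesis using that not_MInfty[OF x] by (cases "F x") auto
  qed
  fix y :: "real vec" assume y: "y \<in> carrier_vec n"
  show "F x + ereal (- v \<bullet> (y - x)) \<le> F y"
  proof (cases "F y")
    case (real b)
    define d where "d = y - x"
    have d: "d \<in> carrier_vec n" using x y unfolding d_def by simp
    have slope: "0 \<le> (b - a + v \<bullet> d) + t * C d" if t: "0 < t" "t < 1" for t
    proof -
      define p where "p = x + t \<cdot>\<^sub>v d"
      have p: "p \<in> carrier_vec n" using x d unfolding p_def by simp
      have "p = t \<cdot>\<^sub>v y + (1 - t) \<cdot>\<^sub>v x"
        using x y unfolding p_def d_def by (intro eq_vecI) (auto simp: algebra_simps)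
      moreover have "F (t \<cdot>\<^sub>v y + (1 - t) \<cdot>\<^sub>v x) \<le> ereal t * F y + ereal (1 - t) * F x"
        using convex x y t unfolding convex_fun_def by blast
      ultimately have "F p \<le> ereal (t * b + (1 - t) * a)"
        using a real by simp
      then obtain c where c: "F p = ereal c" "c \<le> t * b + (1 - t) * a"
        using not_MInfty[OF p] by (cases "F p") auto
      have "a + H x \<le> c + H p" using min[OF p] a c(1) by simp
      also have "H p = H x + t * (v \<bullet> d) + t\<^sup>2 * C d"
        unfolding p_def by (rule H_expansion[OF d])
      finally have "0 \<le> t * ((b - a + v \<bullet> d) + t * C d)"
        using c(2) by (simp add: algebra_simps power2_eq_square)
      then show ?thesis using t by (simp add: zero_le_mult_iff)
    qed
    have "((\<lambda>t. (b - a + v \<bullet> d) + t * C d) \<longlongrightarrow> (b - a + v \<bullet> d) + 0 * C d) (at_right 0)"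
      by (intro tendsto_add tendsto_mult tendsto_const tendsto_ident_at)
    moreover have "\<forall>\<^sub>F t in at_right 0. 0 \<le> (b - a + v \<bullet> d) + t * C d"
      using slope by (intro eventually_at_rightI[of 0 1]) auto
    ultimately have "0 \<le> (b - a + v \<bullet> d) + 0 * C d"
      by (rule tendsto_lowerbound) simp
    moreover have "- v \<bullet> (y - x) = - (v \<bullet> d)"
      unfolding d_def[symmetric] using v d by (simp add: carrier_vecD)
    ultimately show ?thesis using a real by simp
  qed (use not_MInfty[OF y] in simp_all)
qed

lemma quadratic_penalty_expansion:
  fixes A :: "real mat" and \<rho> :: real
  assumes A: "A \<in> carrier_mat m n" and lam: "lam \<in> carrier_vec m" and c: "c \<in> carrier_vec m"
    and x: "x \<in> carrier_vec n" and d: "d \<in> carrier_vec n"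
  defines "H \<equiv> \<lambda>y. lam \<bullet> (A *\<^sub>v y + c) + \<rho> / 2 * ((A *\<^sub>v y + c) \<bullet> (A *\<^sub>v y + c))"
  shows "H (x + t \<cdot>\<^sub>v d) = H x + t * ((transpose_mat A *\<^sub>v (lam + \<rho> \<cdot>\<^sub>v (A *\<^sub>v x + c))) \<bullet> d)
           + t\<^sup>2 * (\<rho> / 2 * ((A *\<^sub>v d) \<bullet> (A *\<^sub>v d)))"
proof -
  define r where "r = A *\<^sub>v x + c"
  define w where "w = A *\<^sub>v d"
  have r: "r \<in> carrier_vec m" and w: "w \<in> carrier_vec m"
    using A c x d unfolding r_def w_def by auto
  have shift: "A *\<^sub>v (x + t \<cdot>\<^sub>v d) + c = r + t \<cdot>\<^sub>v w"
    using A c x d unfolding r_def w_def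
    by (intro eq_vecI) (auto simp: mult_add_distrib_mat_vec[OF A] mult_mat_vec[OF A])
  have "(transpose_mat A *\<^sub>v (lam + \<rho> \<cdot>\<^sub>v r)) \<bullet> d = (lam + \<rho> \<cdot>\<^sub>v r) \<bullet> w"
    unfolding w_def using A d lam r by (intro transpose_vec_mult_scalar) auto
  also have "\<dots> = lam \<bullet> w + \<rho> * (r \<bullet> w)"
    using lam r w by (simp add: add_scalar_prod_distrib[of _ m])
  finally have gradient: "(transpose_mat A *\<^sub>v (lam + \<rho> \<cdot>\<^sub>v r)) \<bullet> d = lam \<bullet> w + \<rho> * (r \<bullet> w)" .
  have "(r + t \<cdot>\<^sub>v w) \<bullet> (r + t \<cdot>\<^sub>v w) = r \<bullet> r + 2 * t * (r \<bullet> w) + t\<^sup>2 * (w \<bullet> w)"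
    using r w comm_scalar_prod[OF w r]
    by (simp add: scalar_prod_add_distrib[of _ m] add_scalar_prod_distrib[of _ m]
        algebra_simps power2_eq_square)
  moreover have "lam \<bullet> (r + t \<cdot>\<^sub>v w) = lam \<bullet> r + t * (lam \<bullet> w)"
    using lam r w by (simp add: scalar_prod_add_distrib[of _ m])
  ultimately show ?thesis
    unfolding H_def shift r_def[symmetric] gradient w_def[symmetric]
    by (simp add: algebra_simps power2_eq_square)
qed

lemma subdiff_of_augmented_lagrangian_minimizer:
  fixes A :: "real mat" and F :: "real vec \<Rightarrow> ereal"
  assumes "proper_fun n F" "convex_fun n F"
    and A: "A \<in> carrier_mat m n" and lam: "lam \<in> carrier_vec m" and c: "c \<in> carrier_vec m"
    and x: "x \<in> carrier_vec n"
    and min: "\<And>y. y \<in> carrier_vec n \<Longrightarrow>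
       F x + ereal (lam \<bullet> (A *\<^sub>v x + c) + \<rho> / 2 * ((A *\<^sub>v x + c) \<bullet> (A *\<^sub>v x + c)))
       \<le> F y + ereal (lam \<bullet> (A *\<^sub>v y + c) + \<rho> / 2 * ((A *\<^sub>v y + c) \<bullet> (A *\<^sub>v y + c)))"
  shows "- (transpose_mat A *\<^sub>v (lam + \<rho> \<cdot>\<^sub>v (A *\<^sub>v x + c))) \<in> subdiff n F x"
  using assms(1,2) x _ min quadratic_penalty_expansion[OF A lam c x]
  by (rule subdiff_of_minimizer_plus_quadratic) (use A in \<open>auto intro: carrier_vecI\<close>)

lemma augmented_residual_split:
  assumes "y \<in> carrier_vec (N * M)" "w \<in> carrier_vec (length arcs * M)"
  shows "Amat N M arcs *\<^sub>v y + Bmat M arcs *\<^sub>v w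
    = (A1mat N M arcs *\<^sub>v y - w) @\<^sub>v (A2mat N M arcs *\<^sub>v y - w)"
  using assms unfolding Amat_mult_vec[OF assms(1)] Bmat_mult_vec[OF assms(2)]
  by (subst append_vec_add[of _ "length arcs * M" _ _ "length arcs * M"])
     (auto simp: minus_add_uminus_vec[of _ "length arcs * M"])

lemma transpose_Bmat_residual:
  assumes y: "y \<in> carrier_vec (N * M)" and w: "w \<in> carrier_vec (length arcs * M)"
  shows "transpose_mat (Bmat M arcs) *\<^sub>v (Amat N M arcs *\<^sub>v y + Bmat M arcs *\<^sub>v w)
    = 2 \<cdot>\<^sub>v w - transpose_mat (Mplus N M arcs) *\<^sub>v y"
proof -
  have "transpose_mat (Mplus N M arcs) *\<^sub>v y = A1mat N M arcs *\<^sub>v y + A2mat N M arcs *\<^sub>v y"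
    unfolding transpose_Mplus using y by (rule add_mult_distrib_mat_vec[OF A1mat_carrier A2mat_carrier])
  then show ?thesis
    using y w unfolding augmented_residual_split[OF y w]
    by (subst transpose_Bmat_mult_vec) (auto intro!: eq_vecI)
qed

lemma transpose_Amat_augmented_gradient:
  assumes graph: "graph_with_arcs N adj arcs"
    and b: "b \<in> carrier_vec (length arcs * M)" and y: "y \<in> carrier_vec (N * M)"
    and q: "q \<in> carrier_vec (N * M)"
  shows "transpose_mat (Amat N M arcs) *\<^sub>v ((b @\<^sub>v - b)
           + \<rho> \<cdot>\<^sub>v (Amat N M arcs *\<^sub>v y + Bmat M arcs *\<^sub>v ((1/2) \<cdot>\<^sub>v (transpose_mat (Mplus N M arcs) *\<^sub>v q))))
    = Mminus N M arcs *\<^sub>v b + (2 * \<rho>) \<cdot>\<^sub>v (Wmat N M adj *\<^sub>v y) - \<rho> \<cdot>\<^sub>v (Lplus N M arcs *\<^sub>v q)"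
proof -
  let ?m = "length arcs * M" and ?n = "N * M"
  let ?A1 = "A1mat N M arcs" and ?A2 = "A2mat N M arcs"
  let ?T1 = "transpose_mat ?A1" and ?T2 = "transpose_mat ?A2"
  define w where "w = (1/2) \<cdot>\<^sub>v (transpose_mat (Mplus N M arcs) *\<^sub>v q)"
  have w: "w \<in> carrier_vec ?m" unfolding w_def using q by simp
  have T1: "?T1 *\<^sub>v (?A1 *\<^sub>v y) = Wmat N M adj *\<^sub>v y"
    using transpose_A1mat_mult_A1mat[OF graph, of M] y
    by (simp flip: assoc_mult_mat_vec[of _ ?n ?m _ ?n])
  have T2: "?T2 *\<^sub>v (?A2 *\<^sub>v y) = Wmat N M adj *\<^sub>v y"
    using transpose_A2mat_mult_A2mat[OF graph, of M] y
    by (simp flip: assoc_mult_mat_vec[of _ ?n ?m _ ?n])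
  have Mminus_b: "Mminus N M arcs *\<^sub>v b = ?T1 *\<^sub>v b - ?T2 *\<^sub>v b"
    unfolding Mminus_def by (rule minus_mult_distrib_mat_vec[of _ ?n ?m]) (use b in simp_all)
  have Mplus_w: "Mplus N M arcs *\<^sub>v w = ?T1 *\<^sub>v w + ?T2 *\<^sub>v w"
    unfolding Mplus_def by (rule add_mult_distrib_mat_vec[of _ ?n ?m]) (use w in simp_all)
  have Lplus_q: "Lplus N M arcs *\<^sub>v q = Mplus N M arcs *\<^sub>v w"
    unfolding Lplus_def w_def using q
    by (simp add: smult_mat_mult_vec assoc_mult_mat_vec[of _ ?n ?m _ ?n] mult_mat_vec[of _ ?n ?m])
  have "(b @\<^sub>v - b) + \<rho> \<cdot>\<^sub>v (Amat N M arcs *\<^sub>v y + Bmat M arcs *\<^sub>v w)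
      = (b + \<rho> \<cdot>\<^sub>v (?A1 *\<^sub>v y - w)) @\<^sub>v (- b + \<rho> \<cdot>\<^sub>v (?A2 *\<^sub>v y - w))"
    unfolding augmented_residual_split[OF y w] smult_append_vec
    using b y w by (subst append_vec_add[of _ ?m _ _ ?m]) auto
  then have "transpose_mat (Amat N M arcs) *\<^sub>v ((b @\<^sub>v - b) + \<rho> \<cdot>\<^sub>v (Amat N M arcs *\<^sub>v y + Bmat M arcs *\<^sub>v w))
      = (?T1 *\<^sub>v b + \<rho> \<cdot>\<^sub>v (?T1 *\<^sub>v (?A1 *\<^sub>v y) - ?T1 *\<^sub>v w))
        + (?T2 *\<^sub>v (- b) + \<rho> \<cdot>\<^sub>v (?T2 *\<^sub>v (?A2 *\<^sub>v y) - ?T2 *\<^sub>v w))"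
    using b y w
    by (simp add: transpose_Amat_mult_vec mult_add_distrib_mat_vec[of _ ?n ?m]
        mult_minus_distrib_mat_vec[of _ ?n ?m] mult_mat_vec[of _ ?n ?m])
  also have "\<dots> = Mminus N M arcs *\<^sub>v b + (2 * \<rho>) \<cdot>\<^sub>v (Wmat N M adj *\<^sub>v y) - \<rho> \<cdot>\<^sub>v (Lplus N M arcs *\<^sub>v q)"
    unfolding T1 T2 Mminus_b Lplus_q Mplus_w using b w y
    by (intro eq_vecI) (auto simp: algebra_simps)
  finally show ?thesis unfolding w_def .
qed

section \<open>The quantized iteration\<close>

locale quantized_admm =
  fixes N M :: nat and arcs :: "(nat \<times> nat) list" and \<Delta> \<rho> :: real
    and x z lam :: "nat \<Rightarrow> real vec"
  assumes rho_pos: "\<rho> > 0"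
    and x_dim: "\<And>k. x k \<in> carrier_vec (N * M)"
    and z_dim: "\<And>k. z k \<in> carrier_vec (length arcs * M)"
    and lam_dim: "\<And>k. lam k \<in> carrier_vec (2 * (length arcs * M))"
    and z0: "z 0 = (1/2) \<cdot>\<^sub>v (transpose_mat (Mplus N M arcs) *\<^sub>v Qv \<Delta> (x 0))"
    and lam0: "vec_last (lam 0) (length arcs * M) = - vec_first (lam 0) (length arcs * M)"
    and z_step: "\<And>k. transpose_mat (Bmat M arcs) *\<^sub>v lam k
       + \<rho> \<cdot>\<^sub>v (transpose_mat (Bmat M arcs) *\<^sub>v
            (Amat N M arcs *\<^sub>v Qv \<Delta> (x (Suc k)) + Bmat M arcs *\<^sub>v z (Suc k)))
       = 0\<^sub>v (length arcs * M)"
    and lam_step: "\<And>k. lam (Suc k) = lam k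
       + \<rho> \<cdot>\<^sub>v (Amat N M arcs *\<^sub>v Qv \<Delta> (x (Suc k)) + Bmat M arcs *\<^sub>v z (Suc k))"
begin

abbreviation \<beta> :: "nat \<Rightarrow> real vec" where "\<beta> k \<equiv> vec_first (lam k) (length arcs * M)"
abbreviation \<gamma> :: "nat \<Rightarrow> real vec" where "\<gamma> k \<equiv> vec_last (lam k) (length arcs * M)"
abbreviation xq :: "nat \<Rightarrow> real vec" where "xq k \<equiv> Qv \<Delta> (x k)"

lemma xq_carrier[simp]: "xq k \<in> carrier_vec (N * M)"
  using x_dim by simp

lemma lam_carrier[simp]: "lam k \<in> carrier_vec (length arcs * M + length arcs * M)"
  using lam_dim[of k] by (simp add: mult_2)

lemma lam_eq_append: "lam k = \<beta> k @\<^sub>v \<gamma> k"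
  by simp

lemma transpose_Bmat_lam: "transpose_mat (Bmat M arcs) *\<^sub>v lam k = - \<beta> k - \<gamma> k"
proof -
  have "transpose_mat (Bmat M arcs) *\<^sub>v (\<beta> k @\<^sub>v \<gamma> k) = - \<beta> k - \<gamma> k"
    by (rule transpose_Bmat_mult_vec) simp_all
  then show ?thesis by (simp only: lam_eq_append[symmetric])
qed

lemma transpose_Bmat_lam_eq_0: "transpose_mat (Bmat M arcs) *\<^sub>v lam k = 0\<^sub>v (length arcs * M)"
proof (cases k)
  case 0
  then show ?thesis unfolding 0 transpose_Bmat_lam lam0 by (intro eq_vecI) auto
next
  case (Suc j)
  let ?BT = "transpose_mat (Bmat M arcs)"
  let ?r = "Amat N M arcs *\<^sub>v xq (Suc j) + Bmat M arcs *\<^sub>v z (Suc j)"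
  have BT: "?BT \<in> carrier_mat (length arcs * M) (length arcs * M + length arcs * M)" by simp
  have "?BT *\<^sub>v lam (Suc j) = ?BT *\<^sub>v lam j + ?BT *\<^sub>v (\<rho> \<cdot>\<^sub>v ?r)"
    unfolding lam_step by (rule mult_add_distrib_mat_vec[OF BT]) simp_all
  also have "?BT *\<^sub>v (\<rho> \<cdot>\<^sub>v ?r) = \<rho> \<cdot>\<^sub>v (?BT *\<^sub>v ?r)"
    by (rule mult_mat_vec[OF BT]) simp
  finally have "?BT *\<^sub>v lam (Suc j) = ?BT *\<^sub>v lam j + \<rho> \<cdot>\<^sub>v (?BT *\<^sub>v ?r)" .
  then show ?thesis using Suc z_step by simp
qed

lemma dual_antisym: "\<gamma> k = - \<beta> k"
proof (rule eq_vecI)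
  fix i assume "i < dim_vec (- \<beta> k)"
  then show "\<gamma> k $ i = (- \<beta> k) $ i"
    using arg_cong[OF transpose_Bmat_lam_eq_0[of k], of "\<lambda>v. v $ i"]
    unfolding transpose_Bmat_lam by simp
qed simp

lemma z_eq: "z k = (1/2) \<cdot>\<^sub>v (transpose_mat (Mplus N M arcs) *\<^sub>v xq k)"
proof (cases k)
  case 0
  then show ?thesis by (simp add: z0)
next
  case (Suc j)
  have "\<rho> \<cdot>\<^sub>v (2 \<cdot>\<^sub>v z k - transpose_mat (Mplus N M arcs) *\<^sub>v xq k) = 0\<^sub>v (length arcs * M)"
    using z_step[of j] transpose_Bmat_lam_eq_0[of j] z_dim[of k]
    unfolding Suc transpose_Bmat_residual[OF xq_carrier z_dim] by simp
  show ?thesis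
  proof (rule eq_vecI)
    fix i assume "i < dim_vec ((1/2) \<cdot>\<^sub>v (transpose_mat (Mplus N M arcs) *\<^sub>v xq k))"
    then have i: "i < length arcs * M" by simp
    have "\<rho> * (2 * z k $ i - (transpose_mat (Mplus N M arcs) *\<^sub>v xq k) $ i) = 0"
      using arg_cong[OF \<open>\<rho> \<cdot>\<^sub>v _ = _\<close>, of "\<lambda>v. v $ i"] i z_dim[of k] by simp
    then show "z k $ i = ((1/2) \<cdot>\<^sub>v (transpose_mat (Mplus N M arcs) *\<^sub>v xq k)) $ i"
      using rho_pos i by simp
  qed (use z_dim[of k] in simp)
qed

lemma beta_Suc: "\<beta> (Suc k) = \<beta> k + (\<rho> / 2) \<cdot>\<^sub>v (transpose_mat (Mminus N M arcs) *\<^sub>v xq (Suc k))"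
proof -
  let ?m = "length arcs * M"
  let ?a1 = "A1mat N M arcs *\<^sub>v xq (Suc k)" and ?a2 = "A2mat N M arcs *\<^sub>v xq (Suc k)"
  have "lam (Suc k) = lam k + ((\<rho> \<cdot>\<^sub>v (?a1 - z (Suc k))) @\<^sub>v (\<rho> \<cdot>\<^sub>v (?a2 - z (Suc k))))"
    unfolding lam_step augmented_residual_split[OF xq_carrier z_dim] smult_append_vec ..
  also have "\<dots> = (\<beta> k + \<rho> \<cdot>\<^sub>v (?a1 - z (Suc k))) @\<^sub>v (\<gamma> k + \<rho> \<cdot>\<^sub>v (?a2 - z (Suc k)))"
    by (subst lam_eq_append) (rule append_vec_add[of _ ?m _ _ ?m], use z_dim in simp_all)
  finally have "\<beta> (Suc k) = \<beta> k + \<rho> \<cdot>\<^sub>v (?a1 - z (Suc k))"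
    using z_dim[of "Suc k"] by (simp add: vec_first_append[of _ ?m])
  moreover have "z (Suc k) = (1/2) \<cdot>\<^sub>v (?a1 + ?a2)"
    unfolding z_eq transpose_Mplus
    by (subst add_mult_distrib_mat_vec[OF A1mat_carrier A2mat_carrier]) simp_all
  moreover have "transpose_mat (Mminus N M arcs) *\<^sub>v xq (Suc k) = ?a1 - ?a2"
    unfolding transpose_Mminus by (rule minus_mult_distrib_mat_vec[OF A1mat_carrier A2mat_carrier]) simp
  ultimately show ?thesis
    by (intro eq_vecI) (auto simp: algebra_simps)
qed

lemma alpha_update:
  "Mminus N M arcs *\<^sub>v \<beta> (Suc k) = Mminus N M arcs *\<^sub>v \<beta> k + \<rho> \<cdot>\<^sub>v (Lminus N M arcs *\<^sub>v xq (Suc k))"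
proof -
  let ?Mm = "Mminus N M arcs" and ?m = "length arcs * M" and ?n = "N * M"
  let ?u = "transpose_mat ?Mm *\<^sub>v xq (Suc k)"
  have "?Mm *\<^sub>v \<beta> (Suc k) = ?Mm *\<^sub>v \<beta> k + (\<rho> / 2) \<cdot>\<^sub>v (?Mm *\<^sub>v ?u)"
    unfolding beta_Suc
    by (simp add: mult_add_distrib_mat_vec[of _ ?n ?m] mult_mat_vec[of _ ?n ?m])
  moreover have "Lminus N M arcs *\<^sub>v xq (Suc k) = (1/2) \<cdot>\<^sub>v (?Mm *\<^sub>v ?u)"
    unfolding Lminus_def
    by (simp add: smult_mat_mult_vec assoc_mult_mat_vec[of _ ?n ?m _ ?n])
  ultimately show ?thesis
    by (intro eq_vecI) auto
qed

lemma x_update_optimality: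
  assumes graph: "graph_with_arcs N adj arcs"
    and proper: "proper_fun (N * M) F" and convex: "convex_fun (N * M) F"
    and min: "\<And>y. y \<in> carrier_vec (N * M) \<Longrightarrow>
       F (x (Suc k)) + ereal (lam k \<bullet> (Amat N M arcs *\<^sub>v x (Suc k) + Bmat M arcs *\<^sub>v z k)
          + \<rho> / 2 * ((Amat N M arcs *\<^sub>v x (Suc k) + Bmat M arcs *\<^sub>v z k) \<bullet>
                      (Amat N M arcs *\<^sub>v x (Suc k) + Bmat M arcs *\<^sub>v z k)))
       \<le> F y + ereal (lam k \<bullet> (Amat N M arcs *\<^sub>v y + Bmat M arcs *\<^sub>v z k)
          + \<rho> / 2 * ((Amat N M arcs *\<^sub>v y + Bmat M arcs *\<^sub>v z k) \<bullet>
                      (Amat N M arcs *\<^sub>v y + Bmat M arcs *\<^sub>v z k)))"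
  shows "\<exists>g\<in>subdiff (N * M) F (x (Suc k)).
           g + (2 * \<rho>) \<cdot>\<^sub>v (Wmat N M adj *\<^sub>v x (Suc k)) + Mminus N M arcs *\<^sub>v \<beta> k
             - \<rho> \<cdot>\<^sub>v (Lplus N M arcs *\<^sub>v xq k) = 0\<^sub>v (N * M)"
proof
  let ?v = "transpose_mat (Amat N M arcs) *\<^sub>v
              (lam k + \<rho> \<cdot>\<^sub>v (Amat N M arcs *\<^sub>v x (Suc k) + Bmat M arcs *\<^sub>v z k))"
  show "- ?v \<in> subdiff (N * M) F (x (Suc k))"
    using proper convex Amat_carrier lam_carrier _ x_dim min
    by (rule subdiff_of_augmented_lagrangian_minimizer) (use z_dim in simp)
  define b where "b = \<beta> k"
  have "lam k = b @\<^sub>v - b"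
    unfolding b_def by (simp only: lam_eq_append[symmetric] dual_antisym[symmetric])
  then have "?v = Mminus N M arcs *\<^sub>v b + (2 * \<rho>) \<cdot>\<^sub>v (Wmat N M adj *\<^sub>v x (Suc k))
                 - \<rho> \<cdot>\<^sub>v (Lplus N M arcs *\<^sub>v xq k)"
    unfolding z_eq
    using transpose_Amat_augmented_gradient[OF graph _ x_dim xq_carrier, of b] b_def by simp
  then show "- ?v + (2 * \<rho>) \<cdot>\<^sub>v (Wmat N M adj *\<^sub>v x (Suc k)) + Mminus N M arcs *\<^sub>v \<beta> k
      - \<rho> \<cdot>\<^sub>v (Lplus N M arcs *\<^sub>v xq k) = 0\<^sub>v (N * M)"
    unfolding b_def by (intro eq_vecI) auto
qed

end

theorem mainTheorem3:
  fixes N M :: nat and adj :: "nat \<Rightarrow> nat \<Rightarrow> bool" and arcs :: "(nat \<times> nat) list"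
    and f :: "nat \<Rightarrow> real vec \<Rightarrow> ereal" and \<Delta> \<rho> :: real
    and x z lam :: "nat \<Rightarrow> real vec"
  assumes N2: "N \<ge> 2" and M1: "M \<ge> 1"
    and graph: "graph_with_arcs N adj arcs" and conn: "connected_graph N adj"
    and A1: "assumption1 N M f"
    and Delta: "\<Delta> > 0" and rho: "\<rho> > 0"
    and x_dim: "\<And>k. x k \<in> carrier_vec (N * M)"
    and z_dim: "\<And>k. z k \<in> carrier_vec (length arcs * M)"
    and lam_dim: "\<And>k. lam k \<in> carrier_vec (2 * (length arcs * M))"
    and z0: "z 0 = (1/2) \<cdot>\<^sub>v (transpose_mat (Mplus N M arcs) *\<^sub>v Qv \<Delta> (x 0))"
    and lam0: "vec_last (lam 0) (length arcs * M) = - vec_first (lam 0) (length arcs * M)"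
    and x_step: "\<And>k y. y \<in> carrier_vec (N * M) \<Longrightarrow>
       fsum N M f (x (Suc k)) + ereal (lam k \<bullet> (Amat N M arcs *\<^sub>v x (Suc k) + Bmat M arcs *\<^sub>v z k)
          + \<rho> / 2 * ((Amat N M arcs *\<^sub>v x (Suc k) + Bmat M arcs *\<^sub>v z k) \<bullet>
                      (Amat N M arcs *\<^sub>v x (Suc k) + Bmat M arcs *\<^sub>v z k)))
       \<le> fsum N M f y + ereal (lam k \<bullet> (Amat N M arcs *\<^sub>v y + Bmat M arcs *\<^sub>v z k)
          + \<rho> / 2 * ((Amat N M arcs *\<^sub>v y + Bmat M arcs *\<^sub>v z k) \<bullet>
                      (Amat N M arcs *\<^sub>v y + Bmat M arcs *\<^sub>v z k)))"
    and z_step: "\<And>k. transpose_mat (Bmat M arcs) *\<^sub>v lam k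
       + \<rho> \<cdot>\<^sub>v (transpose_mat (Bmat M arcs) *\<^sub>v
            (Amat N M arcs *\<^sub>v Qv \<Delta> (x (Suc k)) + Bmat M arcs *\<^sub>v z (Suc k)))
       = 0\<^sub>v (length arcs * M)"
    and lam_step: "\<And>k. lam (Suc k) = lam k
       + \<rho> \<cdot>\<^sub>v (Amat N M arcs *\<^sub>v Qv \<Delta> (x (Suc k)) + Bmat M arcs *\<^sub>v z (Suc k))"
  shows "\<forall>k. vec_last (lam k) (length arcs * M) = - vec_first (lam k) (length arcs * M)
           \<and> z k = (1/2) \<cdot>\<^sub>v (transpose_mat (Mplus N M arcs) *\<^sub>v Qv \<Delta> (x k))
           \<and> (\<exists>g\<in>subdiff (N * M) (fsum N M f) (x (Suc k)).
                g + (2 * \<rho>) \<cdot>\<^sub>v (Wmat N M adj *\<^sub>v x (Suc k))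
                  + Mminus N M arcs *\<^sub>v vec_first (lam k) (length arcs * M)
                  - \<rho> \<cdot>\<^sub>v (Lplus N M arcs *\<^sub>v Qv \<Delta> (x k)) = 0\<^sub>v (N * M))
           \<and> Mminus N M arcs *\<^sub>v vec_first (lam (Suc k)) (length arcs * M)
               = Mminus N M arcs *\<^sub>v vec_first (lam k) (length arcs * M)
                 + \<rho> \<cdot>\<^sub>v (Lminus N M arcs *\<^sub>v Qv \<Delta> (x (Suc k)))"
proof -
  interpret quantized_admm N M arcs \<Delta> \<rho> x z lam
    by unfold_locales (fact assms)+
  have "proper_fun (N * M) (fsum N M f)" "convex_fun (N * M) (fsum N M f)"
    using A1 unfolding assumption1_def by (auto intro!: proper_fun_fsum convex_fun_fsum)
  note optimality = x_update_optimality[OF graph this x_step]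
  show ?thesis
    using dual_antisym z_eq optimality alpha_update by blast
qed

end
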